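(* Consider the polymer model with polymer length $2p$, $p\in\mathbb N$, and potential value $v>0$, and suppose $\mathfrak p<1$. Then for almost every $(\omega,\ell)$ (with respect to $\mu_0\otimes(\text{uniform measure on }\{0,\dots,2p-1\})$) and every $k\in[p]$, $$\mathrm{dist}\Big(2\cos\Big(\frac{\pi k}{p+1}\Big),\ \mathrm{spec}\,H(\omega,\ell)\Big)\le 18\,\frac{k}{p^{3/2}}.$$
   Context: Polymer model: Let $\Omega=\{+1,-1\}^{\mathbb Z}$ with the left shift, and $\mu_0$ a shift-invariant ergodic probability measure on $\Omega$; set $\mathfrak p:=\mu_0(\{\omega:\omega_0=-1\})$. Define the blocks $\hat v_+=(0,\dots,0,-v,\dots,-v)\in\mathbb R^{2p}$ ($p$ zeros followed by $p$ entries $-v$) and $\hat v_-=(-v,\dots,-v)\in\mathbb R^{2p}$, with entries indexed by $m\in\{0,\dots,2p-1\}$. For $\omega\in\Omega$ and $\ell\in\{0,\dots,2p-1\}$ define the potential $V_n(\omega,\ell):=\hat v_{\omega_j}(m)$, where $n+\ell=2pj+m$ with $j\in\mathbb Z$, $m\in\{0,\dots,2p-1\}$ (so the potential is a concatenation of blocks $\hat v_{\omega_j}$ with random offset $\ell$). $H(\omega,\ell)$ is the bounded self-adjoint operator on $\ell^2(\mathbb Z)$ given by $(H\psi)_n=\psi_{n+1}+\psi_{n-1}+V_n(\omega,\ell)\psi_n$. *)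

theory Defs
  imports "HOL-Probability.Probability"
begin

definition Omega_M :: "(int \<Rightarrow> int) measure" where
  "Omega_M = PiM UNIV (\<lambda>_. count_space {-1, 1})"

definition shift :: "(int \<Rightarrow> int) \<Rightarrow> (int \<Rightarrow> int)" where
  "shift \<omega> = (\<lambda>j. \<omega> (j + 1))"

definition shift_invariant :: "(int \<Rightarrow> int) measure \<Rightarrow> bool" where
  "shift_invariant M \<longleftrightarrow> shift \<in> measurable M M \<and> distr M M shift = M"

definition shift_ergodic :: "(int \<Rightarrow> int) measure \<Rightarrow> bool" where
  "shift_ergodic M \<longleftrightarrow>
     (\<forall>A \<in> sets M. shift -` A \<inter> space M = A \<longrightarrow> measure M A = 0 \<or> measure M A = 1)"

definition vblock :: "nat \<Rightarrow> real \<Rightarrow> int \<Rightarrow> int \<Rightarrow> real" where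
  "vblock p v s m = (if s = 1 then (if m < int p then 0 else - v) else - v)"

text \<open>V_n(omega,l) = hat v_{omega_j}(m) where n + l = 2 p j + m, 0 \<le> m < 2p.\<close>
definition polymer_V :: "nat \<Rightarrow> real \<Rightarrow> (int \<Rightarrow> int) \<Rightarrow> int \<Rightarrow> int \<Rightarrow> real" where
  "polymer_V p v \<omega> l n =
     vblock p v (\<omega> ((n + l) div (2 * int p))) ((n + l) mod (2 * int p))"

definition polymer_H :: "nat \<Rightarrow> real \<Rightarrow> (int \<Rightarrow> int) \<Rightarrow> int \<Rightarrow> (int \<Rightarrow> complex) \<Rightarrow> (int \<Rightarrow> complex)" where
  "polymer_H p v \<omega> l \<psi> = (\<lambda>n. \<psi> (n + 1) + \<psi> (n - 1) + complex_of_real (polymer_V p v \<omega> l n) * \<psi> n)"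

definition l2Z :: "(int \<Rightarrow> complex) set" where
  "l2Z = {\<psi>. (\<lambda>n. (cmod (\<psi> n))\<^sup>2) summable_on UNIV}"

text \<open>Spectrum of an operator T (bounded on l^2(Z)): the set of z for which T - z is not a
  bijection of l^2(Z) onto itself (bounded inverse then follows from the open mapping theorem).\<close>
definition spec_l2 :: "((int \<Rightarrow> complex) \<Rightarrow> (int \<Rightarrow> complex)) \<Rightarrow> complex set" where
  "spec_l2 T = {z. \<not> bij_betw (\<lambda>\<psi>. \<lambda>n. T \<psi> n - z * \<psi> n) l2Z l2Z}"

end

theory Submission
  imports Defs
begin

text \<open>On a block with \<open>\<omega>\<^sub>j = +1\<close> the potential vanishes on \<open>p\<close> consecutive sites. There the
  Dirichlet eigenvector \<open>\<psi>(m) = sin (\<pi> k m / (p + 1))\<close>, \<open>1 \<le> m \<le> p\<close>, of the free Laplacian solves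
  \<open>H\<psi> = 2 cos (\<pi> k / (p + 1)) \<psi>\<close> except at the two sites just outside the block, where the defect
  has size \<open>|sin (\<pi> k / (p + 1))| \<le> \<pi> k / (p + 1)\<close>, while \<open>\<parallel>\<psi>\<parallel>\<^sup>2 = (p + 1) / 2\<close>. By Weyl's criterion
  the spectrum of the self-adjoint operator \<open>H\<close> then meets the interval of radius
  \<open>2\<pi> k / (p + 1)\<^sup>3\<^sup>/\<^sup>2 \<le> 18 k / p\<^sup>3\<^sup>/\<^sup>2\<close> around \<open>2 cos (\<pi> k / (p + 1))\<close>. Finally, the all-minus
  configuration is shift-invariant and contained in \<open>{\<omega>\<^sub>0 = -1}\<close>, so by ergodicity and \<open>\<pp> < 1\<close>
  almost every \<open>\<omega>\<close> has a \<open>+\<close> block.\<close>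

section \<open>The Hilbert space \<open>\<ell>\<^sup>2(\<int>)\<close>\<close>

definition l2_sqnorm :: "(int \<Rightarrow> complex) \<Rightarrow> real" where
  "l2_sqnorm f = (\<Sum>\<^sub>\<infinity>n. (cmod (f n))\<^sup>2)"

definition l2_inner :: "(int \<Rightarrow> complex) \<Rightarrow> (int \<Rightarrow> complex) \<Rightarrow> complex" where
  "l2_inner f g = (\<Sum>\<^sub>\<infinity>n. f n * cnj (g n))"

lemma mem_l2Z_iff: "f \<in> l2Z \<longleftrightarrow> (\<lambda>n. (cmod (f n))\<^sup>2) summable_on UNIV"
  by (simp add: l2Z_def)

lemma l2Z_dominated:
  assumes "f \<in> l2Z" "\<And>n. (cmod (g n))\<^sup>2 \<le> c * (cmod (f n))\<^sup>2"
  shows "g \<in> l2Z"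
proof -
  have "(\<lambda>n. c * (cmod (f n))\<^sup>2) summable_on UNIV"
    using assms(1) by (simp add: mem_l2Z_iff summable_on_cmult_right)
  then show ?thesis unfolding mem_l2Z_iff
    by (rule summable_on_comparison_test) (use assms(2) in auto)
qed

lemma l2Z_finite_support:
  assumes "finite F" "\<And>n. n \<notin> F \<Longrightarrow> f n = 0"
  shows "f \<in> l2Z"
  unfolding mem_l2Z_iff
  by (rule finite_nonzero_values_imp_summable_on, rule finite_subset[OF _ assms(1)]) (use assms in auto)

lemma l2Z_add:
  assumes "f \<in> l2Z" "g \<in> l2Z"
  shows "(\<lambda>n. f n + g n) \<in> l2Z"
proof -
  have "(cmod (a + b))\<^sup>2 \<le> 2 * ((cmod a)\<^sup>2 + (cmod b)\<^sup>2)" for a b :: complex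
  proof -
    have "(cmod (a + b))\<^sup>2 \<le> (cmod a + cmod b)\<^sup>2"
      by (simp add: norm_triangle_ineq power_mono)
    also have "\<dots> \<le> 2 * ((cmod a)\<^sup>2 + (cmod b)\<^sup>2)"
      using zero_le_power2[of "cmod a - cmod b"] by (simp add: power2_diff power2_sum)
    finally show ?thesis .
  qed
  moreover have "(\<lambda>n. 2 * ((cmod (f n))\<^sup>2 + (cmod (g n))\<^sup>2)) summable_on UNIV"
    using assms by (intro summable_on_cmult_right summable_on_add) (auto simp: mem_l2Z_iff)
  ultimately show ?thesis unfolding mem_l2Z_iff
    by (metis (no_types, lifting) norm_ge_zero norm_power summable_on_comparison_test)
qed

lemma l2Z_mult_const: "f \<in> l2Z \<Longrightarrow> (\<lambda>n. c * f n) \<in> l2Z"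
  by (erule l2Z_dominated[of _ _ "(cmod c)\<^sup>2"]) (simp add: norm_mult power_mult_distrib)

lemma l2Z_uminus: "f \<in> l2Z \<Longrightarrow> (\<lambda>n. - f n) \<in> l2Z"
  by (erule l2Z_dominated[of _ _ 1]) simp

lemma l2Z_diff: "f \<in> l2Z \<Longrightarrow> g \<in> l2Z \<Longrightarrow> (\<lambda>n. f n - g n) \<in> l2Z"
  using l2Z_add[of f "\<lambda>n. - g n"] l2Z_uminus[of g] by simp

lemma bij_betw_add_int: "bij_betw (\<lambda>n::int. n + c) UNIV UNIV"
  by (rule bij_betwI[where g="\<lambda>n. n - c"]) auto

lemma l2Z_translate: "f \<in> l2Z \<Longrightarrow> (\<lambda>n. f (n + c)) \<in> l2Z"
  unfolding mem_l2Z_iff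
  using summable_on_reindex_bij_betw[OF bij_betw_add_int[of c], of "\<lambda>n. (cmod (f n))\<^sup>2"] by simp

lemma l2Z_translate_minus: "f \<in> l2Z \<Longrightarrow> (\<lambda>n. f (n - c)) \<in> l2Z"
  using l2Z_translate[of f "- c"] by simp

lemma l2Z_mult_bounded:
  assumes "f \<in> l2Z" "\<And>n. \<bar>w n\<bar> \<le> B"
  shows "(\<lambda>n. complex_of_real (w n) * f n) \<in> l2Z"
proof (rule l2Z_dominated[OF assms(1), of _ "B\<^sup>2"])
  fix n
  have "\<bar>w n\<bar>\<^sup>2 \<le> B\<^sup>2"
    using power_mono[OF assms(2)[of n] abs_ge_zero, of 2] by simp
  then show "(cmod (complex_of_real (w n) * f n))\<^sup>2 \<le> B\<^sup>2 * (cmod (f n))\<^sup>2"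
    by (simp add: norm_mult power_mult_distrib mult_right_mono)
qed

lemma l2_sqnorm_nonneg: "0 \<le> l2_sqnorm f"
  unfolding l2_sqnorm_def by (rule infsum_nonneg) simp

lemma sum_le_l2_sqnorm:
  assumes "f \<in> l2Z" "finite F"
  shows "(\<Sum>i\<in>F. (cmod (f i))\<^sup>2) \<le> l2_sqnorm f"
  unfolding l2_sqnorm_def by (rule finite_sum_le_infsum) (use assms in \<open>auto simp: mem_l2Z_iff\<close>)

lemma l2_sqnorm_finite_support:
  assumes "finite F" "\<And>n. n \<notin> F \<Longrightarrow> f n = 0"
  shows "l2_sqnorm f = (\<Sum>n\<in>F. (cmod (f n))\<^sup>2)"
proof -
  have "l2_sqnorm f = (\<Sum>\<^sub>\<infinity>n\<in>F. (cmod (f n))\<^sup>2)"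
    unfolding l2_sqnorm_def by (rule infsum_cong_neutral) (use assms in auto)
  then show ?thesis using assms(1) by simp
qed

lemma l2_sqnorm_eq_0_iff: "f \<in> l2Z \<Longrightarrow> l2_sqnorm f = 0 \<longleftrightarrow> f = (\<lambda>_. 0)"
proof
  assume "f \<in> l2Z" "l2_sqnorm f = 0"
  then have "(cmod (f i))\<^sup>2 \<le> 0" for i
    using sum_le_l2_sqnorm[of f "{i}"] by simp
  then show "f = (\<lambda>_. 0)" by auto
qed (simp add: l2_sqnorm_def)

lemma l2_inner_summable:
  assumes "f \<in> l2Z" "g \<in> l2Z"
  shows "(\<lambda>n. f n * cnj (g n)) summable_on UNIV"
proof -
  have "norm (f n * cnj (g n)) \<le> (cmod (f n))\<^sup>2 + (cmod (g n))\<^sup>2" for n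
  proof -
    have "2 * (cmod (f n) * cmod (g n)) \<le> (cmod (f n))\<^sup>2 + (cmod (g n))\<^sup>2"
      using zero_le_power2[of "cmod (f n) - cmod (g n)"] by (simp add: power2_diff)
    moreover have "0 \<le> cmod (f n) * cmod (g n)" by simp
    moreover have "norm (f n * cnj (g n)) = cmod (f n) * cmod (g n)" by (simp add: norm_mult)
    ultimately show ?thesis by linarith
  qed
  moreover have "(\<lambda>n. (cmod (f n))\<^sup>2 + (cmod (g n))\<^sup>2) summable_on UNIV"
    using assms by (intro summable_on_add) (auto simp: mem_l2Z_iff)
  ultimately have "(\<lambda>n. norm (f n * cnj (g n))) summable_on UNIV"
    by (metis (no_types, lifting) norm_ge_zero summable_on_comparison_test)
  then show ?thesis by (rule abs_summable_summable)
qed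

lemma Re_l2_inner_self:
  assumes "f \<in> l2Z"
  shows "Re (l2_inner f f) = l2_sqnorm f"
proof -
  have "Re (l2_inner f f) = (\<Sum>\<^sub>\<infinity>n. Re (f n * cnj (f n)))"
    unfolding l2_inner_def by (rule infsum_Re[symmetric]) (rule l2_inner_summable[OF assms assms])
  also have "\<dots> = l2_sqnorm f"
    unfolding l2_sqnorm_def by (rule infsum_cong) (simp add: complex_mult_cnj cmod_power2)
  finally show ?thesis .
qed

lemma l2_inner_commute: "l2_inner g f = cnj (l2_inner f g)"
  unfolding l2_inner_def infsum_cnj[symmetric] by (simp add: mult.commute)

lemma l2_inner_add_left:
  assumes "f \<in> l2Z" "g \<in> l2Z" "h \<in> l2Z"
  shows "l2_inner (\<lambda>n. f n + g n) h = l2_inner f h + l2_inner g h"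
  unfolding l2_inner_def
  using infsum_add[OF l2_inner_summable[OF assms(1,3)] l2_inner_summable[OF assms(2,3)]]
  by (simp add: distrib_right)

lemma l2_inner_add_right:
  assumes "f \<in> l2Z" "g \<in> l2Z" "h \<in> l2Z"
  shows "l2_inner h (\<lambda>n. f n + g n) = l2_inner h f + l2_inner h g"
  using l2_inner_add_left[OF assms] l2_inner_commute by (metis complex_cnj_add)

lemma l2_inner_mult_left: "l2_inner (\<lambda>n. c * f n) h = c * l2_inner f h"
  unfolding l2_inner_def
  using infsum_cmult_right'[of c "\<lambda>n. f n * cnj (h n)" UNIV] by (simp add: mult.assoc)

lemma l2_inner_translate: "l2_inner (\<lambda>n. f (n + c)) g = l2_inner f (\<lambda>n. g (n - c))"
  unfolding l2_inner_def
  using infsum_reindex_bij_betw[OF bij_betw_add_int[of c], of "\<lambda>m. f m * cnj (g (m - c))"] by simp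

lemma l2_inner_translate_minus: "l2_inner (\<lambda>n. f (n - c)) g = l2_inner f (\<lambda>n. g (n + c))"
  using l2_inner_translate[of f "- c" g] by simp

lemma l2_inner_mult_real: "l2_inner (\<lambda>n. complex_of_real (w n) * f n) g = l2_inner f (\<lambda>n. complex_of_real (w n) * g n)"
  unfolding l2_inner_def by (simp add: mult_ac)

text \<open>\<open>\<ell>\<^sup>2(\<int>)\<close> as a type, with the real part of the complex inner product: this makes it a
  real Hilbert space, so that the library's real normed-space theory applies.\<close>

typedef l2 = l2Z morphisms vec Abs_l2
  by (rule exI[of _ "\<lambda>_. 0"]) (simp add: l2Z_def)

setup_lifting type_definition_l2

instantiation l2 :: real_vector
begin
lift_definition zero_l2 :: l2 is "\<lambda>_. 0" by (simp add: l2Z_def)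
lift_definition plus_l2 :: "l2 \<Rightarrow> l2 \<Rightarrow> l2" is "\<lambda>f g n. f n + g n" by (rule l2Z_add)
lift_definition minus_l2 :: "l2 \<Rightarrow> l2 \<Rightarrow> l2" is "\<lambda>f g n. f n - g n" by (rule l2Z_diff)
lift_definition uminus_l2 :: "l2 \<Rightarrow> l2" is "\<lambda>f n. - f n" by (rule l2Z_uminus)
lift_definition scaleR_l2 :: "real \<Rightarrow> l2 \<Rightarrow> l2" is "\<lambda>r f n. complex_of_real r * f n"
  by (rule l2Z_mult_const)
instance
  by standard (transfer; simp add: algebra_simps)+
end

instantiation l2 :: real_inner
begin
lift_definition norm_l2 :: "l2 \<Rightarrow> real" is "\<lambda>f. sqrt (l2_sqnorm f)" .
lift_definition inner_l2 :: "l2 \<Rightarrow> l2 \<Rightarrow> real" is "\<lambda>f g. Re (l2_inner f g)" .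
definition sgn_l2 :: "l2 \<Rightarrow> l2" where "sgn_l2 x = x /\<^sub>R norm x"
definition dist_l2 :: "l2 \<Rightarrow> l2 \<Rightarrow> real" where "dist_l2 x y = norm (x - y)"
definition uniformity_l2 :: "(l2 \<times> l2) filter" where
  "uniformity_l2 = (INF e\<in>{0<..}. principal {(x, y). dist x y < e})"
definition open_l2 :: "l2 set \<Rightarrow> bool" where
  "open_l2 U = (\<forall>x\<in>U. \<forall>\<^sub>F (x', y) in uniformity. x' = x \<longrightarrow> y \<in> U)"
instance
proof
  fix x y z :: l2 and a :: real
  show "inner x y = inner y x" by transfer (subst l2_inner_commute, simp)
  show "inner (x + y) z = inner x z + inner y z" by transfer (simp add: l2_inner_add_left)
  show "inner (a *\<^sub>R x) y = a * inner x y" by transfer (simp add: l2_inner_mult_left)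
  show "0 \<le> inner x x" by transfer (simp add: Re_l2_inner_self l2_sqnorm_nonneg)
  show "inner x x = 0 \<longleftrightarrow> x = 0" by transfer (simp add: Re_l2_inner_self l2_sqnorm_eq_0_iff)
  show "norm x = sqrt (inner x x)" by transfer (simp add: Re_l2_inner_self)
qed (simp_all add: sgn_l2_def dist_l2_def uniformity_l2_def open_l2_def)
end

lemma vec_in_l2Z: "vec x \<in> l2Z"
  using vec by blast

lemma vec_diff: "vec (x - y) = (\<lambda>n. vec x n - vec y n)"
  by transfer simp

lemma power2_norm_l2: "(norm x)\<^sup>2 = l2_sqnorm (vec x)"
  by transfer (simp add: l2_sqnorm_nonneg)

lemma cmod_vec_le_norm: "cmod (vec x i) \<le> norm x"
proof (rule power2_le_imp_le)
  show "(cmod (vec x i))\<^sup>2 \<le> (norm x)\<^sup>2"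
    using sum_le_l2_sqnorm[OF vec_in_l2Z, of "{i}" x] by (simp only: power2_norm_l2) simp
qed simp

lemma l2Z_pointwise_limit:
  assumes "\<forall>\<^sub>F n in sequentially. (\<lambda>i. h i - f n i) \<in> l2Z \<and> l2_sqnorm (\<lambda>i. h i - f n i) \<le> c"
    and "\<And>i. (\<lambda>n. f n i) \<longlonglongrightarrow> g i"
  shows "(\<lambda>i. h i - g i) \<in> l2Z \<and> l2_sqnorm (\<lambda>i. h i - g i) \<le> c"
proof -
  have finite_sums: "(\<Sum>i\<in>F. (cmod (h i - g i))\<^sup>2) \<le> c" if "finite F" for F
  proof (rule tendsto_le[OF trivial_limit_sequentially])
    show "(\<lambda>n. \<Sum>i\<in>F. (cmod (h i - f n i))\<^sup>2) \<longlonglongrightarrow> (\<Sum>i\<in>F. (cmod (h i - g i))\<^sup>2)"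
      by (intro tendsto_intros assms(2))
    show "\<forall>\<^sub>F n in sequentially. (\<Sum>i\<in>F. (cmod (h i - f n i))\<^sup>2) \<le> c"
      using assms(1)
    proof eventually_elim
      case (elim n)
      then show ?case using sum_le_l2_sqnorm[OF _ \<open>finite F\<close>, of "\<lambda>i. h i - f n i"] by linarith
    qed
  qed simp
  have summable: "(\<lambda>i. (cmod (h i - g i))\<^sup>2) summable_on UNIV"
    by (rule nonneg_bdd_above_summable_on) (use finite_sums in \<open>auto intro!: bdd_aboveI\<close>)
  then show ?thesis
    unfolding mem_l2Z_iff l2_sqnorm_def
    using infsum_le_finite_sums[OF summable] finite_sums by auto
qed

lemma Cauchy_vec:
  assumes "Cauchy X"
  shows "Cauchy (\<lambda>m. vec (X m) i)"
proof (rule CauchyI)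
  fix e :: real
  assume "0 < e"
  then obtain M where M: "\<And>m n. M \<le> m \<Longrightarrow> M \<le> n \<Longrightarrow> norm (X m - X n) < e"
    using assms CauchyD by blast
  have "cmod (vec (X m) i - vec (X n) i) \<le> norm (X m - X n)" for m n
    using cmod_vec_le_norm[of "X m - X n" i] by (simp add: vec_diff)
  then show "\<exists>M. \<forall>m\<ge>M. \<forall>n\<ge>M. norm (vec (X m) i - vec (X n) i) < e"
    using M by (meson le_less_trans)
qed

lemma Cauchy_vec_minus_pointwise_limit:
  assumes "Cauchy X" "\<And>i. (\<lambda>m. vec (X m) i) \<longlonglongrightarrow> g i" "e > 0"
  shows "\<exists>N. \<forall>m\<ge>N. (\<lambda>i. vec (X m) i - g i) \<in> l2Z \<and> l2_sqnorm (\<lambda>i. vec (X m) i - g i) \<le> e\<^sup>2"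
proof -
  obtain N where N: "\<And>m n. N \<le> m \<Longrightarrow> N \<le> n \<Longrightarrow> norm (X m - X n) < e"
    using assms(1,3) CauchyD by blast
  have "(\<lambda>i. vec (X m) i - g i) \<in> l2Z \<and> l2_sqnorm (\<lambda>i. vec (X m) i - g i) \<le> e\<^sup>2" if "N \<le> m" for m
  proof (rule l2Z_pointwise_limit[OF _ assms(2)])
    show "\<forall>\<^sub>F n in sequentially. (\<lambda>i. vec (X m) i - vec (X n) i) \<in> l2Z
        \<and> l2_sqnorm (\<lambda>i. vec (X m) i - vec (X n) i) \<le> e\<^sup>2"
      unfolding eventually_sequentially
    proof (intro exI allI impI)
      fix n
      assume "N \<le> n"
      then have "(norm (X m - X n))\<^sup>2 \<le> e\<^sup>2"
        using N[OF \<open>N \<le> m\<close>] by (simp add: power_strict_mono less_imp_le)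
      then show "(\<lambda>i. vec (X m) i - vec (X n) i) \<in> l2Z
          \<and> l2_sqnorm (\<lambda>i. vec (X m) i - vec (X n) i) \<le> e\<^sup>2"
        using vec_in_l2Z[of "X m - X n"] unfolding power2_norm_l2 vec_diff by simp
    qed
  qed
  then show ?thesis by blast
qed

instance l2 :: banach
proof
  fix X :: "nat \<Rightarrow> l2"
  assume "Cauchy X"
  then obtain g where g: "\<And>i. (\<lambda>m. vec (X m) i) \<longlonglongrightarrow> g i"
    using Cauchy_vec unfolding Cauchy_convergent_iff convergent_def by metis
  note close = Cauchy_vec_minus_pointwise_limit[OF \<open>Cauchy X\<close> g]
  obtain N1 where "(\<lambda>i. vec (X N1) i - g i) \<in> l2Z"
    using close[of 1] by auto
  from l2Z_diff[OF vec_in_l2Z[of "X N1"] this] have g_in: "g \<in> l2Z"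
    by simp
  have "X \<longlonglongrightarrow> Abs_l2 g"
  proof (rule LIMSEQ_I)
    fix r :: real
    assume "0 < r"
    then obtain N where N: "\<And>m. N \<le> m \<Longrightarrow> l2_sqnorm (\<lambda>i. vec (X m) i - g i) \<le> (r/2)\<^sup>2"
      using close[of "r/2"] by auto
    show "\<exists>N. \<forall>m\<ge>N. norm (X m - Abs_l2 g) < r"
    proof (intro exI allI impI)
      fix m
      assume "N \<le> m"
      have "(norm (X m - Abs_l2 g))\<^sup>2 = l2_sqnorm (\<lambda>i. vec (X m) i - g i)"
        unfolding power2_norm_l2 vec_diff using g_in by (simp add: Abs_l2_inverse)
      then have "(norm (X m - Abs_l2 g))\<^sup>2 \<le> (r/2)\<^sup>2"
        using N[OF \<open>N \<le> m\<close>] by simp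
      then show "norm (X m - Abs_l2 g) < r"
        using \<open>0 < r\<close> power2_le_imp_le[of "norm (X m - Abs_l2 g)" "r/2"] by simp
    qed
  qed
  then show "convergent X" by (auto simp: convergent_def)
qed

section \<open>Symmetric operators on real Hilbert spaces\<close>

definition symmetric_operator :: "('a::real_inner \<Rightarrow> 'a) \<Rightarrow> bool" where
  "symmetric_operator T \<longleftrightarrow> (\<forall>x y. inner (T x) y = inner x (T y))"

definition bounded_below :: "('a::real_normed_vector \<Rightarrow> 'b::real_normed_vector) \<Rightarrow> bool" where
  "bounded_below T \<longleftrightarrow> (\<exists>C>0. \<forall>u. norm u \<le> C * norm (T u))"

lemma symmetric_operatorD: "symmetric_operator T \<Longrightarrow> inner (T x) y = inner x (T y)"
  by (simp add: symmetric_operator_def)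

lemma symmetric_operator_minus_scaleR:
  "symmetric_operator T \<Longrightarrow> symmetric_operator (\<lambda>x. T x - s *\<^sub>R x)"
  by (simp add: symmetric_operator_def inner_diff_left inner_diff_right)

lemma linear_inv_symmetric_operator:
  fixes T :: "'a::real_inner \<Rightarrow> 'a"
  assumes "linear T" "symmetric_operator T" "bij T"
  shows "linear (inv T)" "symmetric_operator (inv T)"
proof -
  have TS: "T (inv T y) = y" and ST: "inv T (T x) = x" for x y
    using assms(3) by (simp_all add: bij_is_surj surj_f_inv_f bij_is_inj)
  show "linear (inv T)"
  proof (rule linearI)
    fix a b :: 'a and r :: real
    show "inv T (a + b) = inv T a + inv T b"
      by (metis ST TS linear_add[OF assms(1)])
    show "inv T (r *\<^sub>R a) = r *\<^sub>R inv T a"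
      by (metis ST TS linear_scale[OF assms(1)])
  qed
  show "symmetric_operator (inv T)"
    unfolding symmetric_operator_def
    by (metis TS symmetric_operatorD[OF assms(2)])
qed

text \<open>A symmetric operator is weakly continuous, so its norm is weakly lower semicontinuous.\<close>

lemma closed_norm_le_symmetric_operator:
  fixes S :: "'a::real_inner \<Rightarrow> 'a"
  assumes "symmetric_operator S"
  shows "closed {x. norm (S x) \<le> c}"
proof (cases "c < 0")
  case True
  then have "{x. norm (S x) \<le> c} = {}"
    by (smt (verit, best) Collect_empty_eq norm_ge_zero)
  then show ?thesis by simp
next
  case False
  have "{x. norm (S x) \<le> c} = (\<Inter>h. {x. inner (S h) x \<le> c * norm h})"
  proof (intro equalityI subsetI)
    fix x
    assume "x \<in> {x. norm (S x) \<le> c}"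
    then have "inner h (S x) \<le> c * norm h" for h
      using norm_cauchy_schwarz[of h "S x"] mult_left_mono[of "norm (S x)" c "norm h"]
      by (simp add: mult.commute)
    then show "x \<in> (\<Inter>h. {x. inner (S h) x \<le> c * norm h})"
      by (simp add: symmetric_operatorD[OF assms])
  next
    fix x
    assume "x \<in> (\<Inter>h. {x. inner (S h) x \<le> c * norm h})"
    then have "inner (S (S x)) x \<le> c * norm (S x)"
      by blast
    then have "(norm (S x))\<^sup>2 \<le> c * norm (S x)"
      by (simp add: symmetric_operatorD[OF assms] power2_norm_eq_inner)
    then show "x \<in> {x. norm (S x) \<le> c}"
      using False by (cases "norm (S x) = 0") (auto simp: power2_eq_square)
  qed
  then show ?thesis
    by (simp add: closed_INT closed_halfspace_le)
qed

lemma closed_cover_interior_nonempty: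
  fixes F :: "nat \<Rightarrow> 'a::complete_space set"
  assumes "\<And>n. closed (F n)" "(\<Union>n. F n) = UNIV"
  shows "\<exists>n. interior (F n) \<noteq> {}"
proof (rule ccontr)
  assume "\<nexists>n. interior (F n) \<noteq> {}"
  then have "euclidean interior_of \<Union> (range F) = {}"
    by (intro Baire_category_alt)
      (auto simp: completely_metrizable_space_euclidean closed_closedin[symmetric] assms(1)
        euclidean_interior_of)
  then show False
    using assms(2) by (simp add: euclidean_interior_of)
qed

lemma bounded_linear_of_bounded_on_ball:
  fixes S :: "'a::real_normed_vector \<Rightarrow> 'b::real_normed_vector"
  assumes "linear S" "r > 0" "\<And>y. y \<in> ball x0 r \<Longrightarrow> norm (S y) \<le> c"
  shows "bounded_linear S"
proof -
  have small: "norm (S y) \<le> 2 * c" if "norm y < r" for y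
  proof -
    have "norm (S (x0 + y)) \<le> c" "norm (S x0) \<le> c"
      using assms(2,3) that by (auto simp: dist_norm)
    moreover have "S y = S (x0 + y) - S x0"
      by (simp add: linear_add[OF assms(1)])
    ultimately show ?thesis
      by (metis norm_triangle_ineq4 order_trans add_mono mult_2)
  qed
  have "norm (S u) \<le> norm u * (4 * c / r)" for u
  proof (cases "u = 0")
    case True
    then show ?thesis using linear_0[OF assms(1)] by simp
  next
    case False
    define a where "a = r / (2 * norm u)"
    have "a > 0" "norm (a *\<^sub>R u) < r"
      using False assms(2) by (simp_all add: a_def)
    then have "a * norm (S u) \<le> 2 * c"
      using small[of "a *\<^sub>R u"] by (simp add: linear_scale[OF assms(1)])
    then show ?thesis
      using \<open>a > 0\<close> False assms(2) by (simp add: a_def field_simps)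
  qed
  then show ?thesis
    by (intro bounded_linear_intro linear_add[OF assms(1)] linear_scale[OF assms(1)])
qed

text \<open>A special case of the bounded inverse theorem, proved by Baire category: the sublevel sets
  of \<open>x \<mapsto> \<parallel>T\<inverse> x\<parallel>\<close> are closed because \<open>T\<inverse>\<close> is symmetric.\<close>

lemma bounded_linear_inv_symmetric_operator:
  fixes T :: "'a::{real_inner,banach} \<Rightarrow> 'a"
  assumes "linear T" "symmetric_operator T" "bij T"
  shows "bounded_linear (inv T)"
proof -
  note inv = linear_inv_symmetric_operator[OF assms]
  define F where "F n = {x. norm (inv T x) \<le> real n}" for n
  have "closed (F n)" for n
    unfolding F_def by (rule closed_norm_le_symmetric_operator[OF inv(2)])
  moreover have "(\<Union>n. F n) = UNIV"
    using real_arch_simple by (auto simp: F_def)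
  ultimately obtain n x0 where "x0 \<in> interior (F n)"
    using closed_cover_interior_nonempty by blast
  then obtain r where "r > 0" "ball x0 r \<subseteq> F n"
    by (meson open_contains_ball_eq open_interior interior_subset subset_trans)
  then show ?thesis
    by (intro bounded_linear_of_bounded_on_ball[OF inv(1), of r x0 "real n"]) (auto simp: F_def)
qed

lemma bounded_below_bij_symmetric_operator:
  fixes T :: "'a::{real_inner,banach} \<Rightarrow> 'a"
  assumes "linear T" "symmetric_operator T" "bij T"
  shows "bounded_below T"
proof -
  note bl = bounded_linear_inv_symmetric_operator[OF assms]
  have "norm u \<le> (onorm (inv T) + 1) * norm (T u)" for u
  proof -
    have "norm u = norm (inv T (T u))"
      using assms(3) by (simp add: bij_is_inj)
    also have "\<dots> \<le> onorm (inv T) * norm (T u)"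
      by (rule onorm[OF bl])
    also have "\<dots> \<le> (onorm (inv T) + 1) * norm (T u)"
      by (simp add: mult_right_mono)
    finally show ?thesis .
  qed
  moreover have "onorm (inv T) + 1 > 0"
    using onorm_pos_le[OF bl] by simp
  ultimately show ?thesis
    unfolding bounded_below_def by blast
qed

lemma bounded_below_comp:
  assumes "bounded_below f" "bounded_below g"
  shows "bounded_below (\<lambda>u. f (g u))"
proof -
  obtain C1 C2 where C: "C1 > 0" "C2 > 0" "\<And>u. norm u \<le> C1 * norm (f u)" "\<And>u. norm u \<le> C2 * norm (g u)"
    using assms unfolding bounded_below_def by blast
  have "norm u \<le> C2 * (C1 * norm (f (g u)))" for u
    using C(4)[of u] mult_left_mono[OF C(3)[of "g u"] less_imp_le[OF C(2)]] by (rule order_trans)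
  then show ?thesis
    unfolding bounded_below_def using C(1,2)
    by (intro exI[of _ "C2 * C1"]) (simp add: mult.assoc)
qed

lemma bounded_below_square_minus:
  assumes "linear T" "bounded_below (\<lambda>x. T x - s *\<^sub>R x)" "bounded_below (\<lambda>x. T x - (- s) *\<^sub>R x)"
  shows "bounded_below (\<lambda>x. T (T x) - s\<^sup>2 *\<^sub>R x)"
proof -
  have "T (T x - (- s) *\<^sub>R x) - s *\<^sub>R (T x - (- s) *\<^sub>R x) = T (T x) - s\<^sup>2 *\<^sub>R x" for x
    by (simp add: linear_add[OF assms(1)] linear_diff[OF assms(1)] linear_scale[OF assms(1)]
        algebra_simps power2_eq_square)
  then show ?thesis
    using bounded_below_comp[OF assms(2,3)] by simp
qed

lemma exists_unit_norm_gt_onorm: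
  fixes R :: "'a::real_normed_vector \<Rightarrow> 'b::real_normed_vector"
  assumes "bounded_linear R" "0 \<le> t" "t < onorm R"
  shows "\<exists>y. norm y = 1 \<and> t < norm (R y)"
proof -
  have "bdd_above (range (\<lambda>x. norm (R x) / norm x))"
    using le_onorm[OF assms(1)] by (auto intro!: bdd_aboveI)
  then obtain x where x: "t < norm (R x) / norm x"
    using assms(3) less_cSUP_iff[OF UNIV_not_empty] unfolding onorm_def by blast
  then have "x \<noteq> 0"
    using assms(2) by auto
  have "R (x /\<^sub>R norm x) = (1 / norm x) *\<^sub>R R x"
    by (simp add: linear_scale[OF bounded_linear.linear[OF assms(1)]] divide_inverse)
  then show ?thesis
    using x \<open>x \<noteq> 0\<close> by (intro exI[of _ "x /\<^sub>R norm x"]) (simp add: divide_inverse mult.commute)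
qed

lemma symmetric_operator_square_defect:
  fixes R :: "'a::real_inner \<Rightarrow> 'a"
  assumes "bounded_linear R" "symmetric_operator R" "norm y = 1"
  shows "(norm (R (R y) - (onorm R)\<^sup>2 *\<^sub>R y))\<^sup>2 \<le> (onorm R)\<^sup>2 * ((onorm R)\<^sup>2 - (norm (R y))\<^sup>2)"
proof -
  define M where "M = onorm R"
  have "norm (R (R y)) \<le> M * norm (R y)"
    unfolding M_def by (rule onorm[OF assms(1)])
  then have RRy: "(norm (R (R y)))\<^sup>2 \<le> M\<^sup>2 * (norm (R y))\<^sup>2"
    by (metis norm_ge_zero power_mono power_mult_distrib)
  have "inner (R (R y)) y = (norm (R y))\<^sup>2"
    by (simp add: symmetric_operatorD[OF assms(2)] power2_norm_eq_inner)
  moreover have "inner y y = 1"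
    using assms(3) by (simp add: power2_norm_eq_inner[symmetric])
  ultimately have "(norm (R (R y) - M\<^sup>2 *\<^sub>R y))\<^sup>2 = (norm (R (R y)))\<^sup>2 - 2 * M\<^sup>2 * (norm (R y))\<^sup>2 + M\<^sup>2 * M\<^sup>2"
    unfolding power2_norm_eq_inner
    by (simp add: inner_diff_left inner_diff_right inner_commute[of y "R (R y)"] algebra_simps)
  then show ?thesis
    using RRy by (simp add: M_def algebra_simps power2_eq_square)
qed

lemma symmetric_operator_onorm_approx_eigenvector:
  fixes R :: "'a::real_inner \<Rightarrow> 'a"
  assumes "bounded_linear R" "symmetric_operator R" "onorm R > 0" "\<epsilon> > 0"
  shows "\<exists>y. norm y = 1 \<and> norm (R (R y) - (onorm R)\<^sup>2 *\<^sub>R y) \<le> \<epsilon>"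
proof -
  define M where "M = onorm R"
  define a where "a = \<epsilon>\<^sup>2 / (2 * M ^ 3)"
  have M: "M > 0" and a: "a > 0"
    using assms(3,4) by (simp_all add: M_def a_def)
  obtain y where y: "norm y = 1" "max 0 (M - a) < norm (R y)"
    using exists_unit_norm_gt_onorm[OF assms(1), of "max 0 (M - a)"] M a by (auto simp: M_def)
  have "norm (R y) \<le> M"
    using onorm[OF assms(1), of y] y(1) by (simp add: M_def)
  then have "(M - norm (R y)) * (M + norm (R y)) \<le> a * (2 * M)"
    using y(2) a M by (intro mult_mono) auto
  then have "M\<^sup>2 * (M\<^sup>2 - (norm (R y))\<^sup>2) \<le> M\<^sup>2 * (a * (2 * M))"
    by (intro mult_left_mono) (simp_all add: power2_eq_square algebra_simps)
  also have "\<dots> = \<epsilon>\<^sup>2"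
    using M by (simp add: a_def power2_eq_square power3_eq_cube)
  finally have "(norm (R (R y) - M\<^sup>2 *\<^sub>R y))\<^sup>2 \<le> \<epsilon>\<^sup>2"
    using symmetric_operator_square_defect[OF assms(1,2) y(1)] by (simp add: M_def)
  then show ?thesis
    using y(1) assms(4) power2_le_imp_le by (auto simp: M_def)
qed

text \<open>With \<open>R = T\<inverse>\<close> and \<open>s\<^sub>0 = 1 / \<parallel>R\<parallel>\<close>, an approximate eigenvector of \<open>R\<^sup>2\<close> for \<open>\<parallel>R\<parallel>\<^sup>2\<close> is
  an approximate eigenvector of \<open>T\<^sup>2\<close> for \<open>s\<^sub>0\<^sup>2\<close>.\<close>

lemma not_bounded_below_square_minus_inv_onorm:
  fixes T :: "'a::{real_inner,banach} \<Rightarrow> 'a"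
  assumes "linear T" "symmetric_operator T" "bij T" "onorm (inv T) > 0"
  shows "\<not> bounded_below (\<lambda>u. T (T u) - (1 / onorm (inv T))\<^sup>2 *\<^sub>R u)"
proof
  define M where "M = onorm (inv T)"
  assume "bounded_below (\<lambda>u. T (T u) - (1 / onorm (inv T))\<^sup>2 *\<^sub>R u)"
  then obtain D where D: "D > 0" "\<And>u. norm u \<le> D * norm (T (T u) - (1 / M)\<^sup>2 *\<^sub>R u)"
    unfolding bounded_below_def M_def by blast
  have M: "M > 0" "M\<^sup>2 > 0"
    using assms(4) by (simp_all add: M_def)
  define \<epsilon> where "\<epsilon> = M ^ 4 / (2 * D + 2 * M\<^sup>2)"
  have "2 * D + 2 * M\<^sup>2 > 0"
    using M D by (simp add: add_pos_pos)
  then have "\<epsilon> > 0"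
    using M by (simp add: \<epsilon>_def)
  then obtain y where y: "norm y = 1" "norm (inv T (inv T y) - M\<^sup>2 *\<^sub>R y) \<le> \<epsilon>"
    using symmetric_operator_onorm_approx_eigenvector bounded_linear_inv_symmetric_operator[OF assms(1-3)]
      linear_inv_symmetric_operator(2)[OF assms(1-3)] assms(4) by (auto simp: M_def)
  define u where "u = inv T (inv T y)"
  have "T (T u) = y"
    using assms(3) by (simp add: u_def bij_is_surj surj_f_inv_f)
  then have "T (T u) - (1 / M)\<^sup>2 *\<^sub>R u = - (1 / M\<^sup>2) *\<^sub>R (u - M\<^sup>2 *\<^sub>R y)"
    using M by (simp add: algebra_simps power2_eq_square)
  then have "norm (T (T u) - (1 / M)\<^sup>2 *\<^sub>R u) \<le> \<epsilon> / M\<^sup>2"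
    using y(2) by (simp add: u_def divide_right_mono)
  then have "norm u \<le> D * (\<epsilon> / M\<^sup>2)"
    using D(2)[of u] mult_left_mono[of _ _ D] D(1) by (meson less_imp_le order_trans)
  moreover have "M\<^sup>2 - \<epsilon> \<le> norm u"
    using norm_triangle_ineq2[of "M\<^sup>2 *\<^sub>R y" u] y by (simp add: u_def norm_minus_commute)
  moreover have "D * (\<epsilon> / M\<^sup>2) + \<epsilon> = M\<^sup>2 / 2"
  proof -
    have "\<epsilon> * (D + M\<^sup>2) = M ^ 4 / 2"
      using \<open>2 * D + 2 * M\<^sup>2 > 0\<close> by (simp add: \<epsilon>_def field_simps)
    then have "\<epsilon> * (D + M\<^sup>2) / M\<^sup>2 = M\<^sup>2 / 2"
      using M by (simp add: power2_eq_square power4_eq_xxxx)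
    moreover have "D * (\<epsilon> / M\<^sup>2) + \<epsilon> = \<epsilon> * (D + M\<^sup>2) / M\<^sup>2"
      using M by (simp add: field_simps)
    ultimately show ?thesis by simp
  qed
  ultimately show False
    using M(2) by linarith
qed

text \<open>Weyl's criterion, one direction: if \<open>T - s\<close> were invertible for all \<open>\<bar>s\<bar> \<le> d\<close>, then
  \<open>s\<^sub>0 = 1 / \<parallel>T\<inverse>\<parallel> \<le> d\<close> because \<open>\<parallel>T\<phi>\<parallel> \<le> d\<close>, and \<open>T\<^sup>2 - s\<^sub>0\<^sup>2 = (T - s\<^sub>0)(T + s\<^sub>0)\<close> would be invertible.\<close>

lemma symmetric_operator_spectrum_near_approx_eigenvalue:
  fixes T :: "'a::{real_inner,banach} \<Rightarrow> 'a"
  assumes "linear T" "symmetric_operator T" "norm \<phi> = 1" "norm (T \<phi>) \<le> d"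
  shows "\<exists>s. \<bar>s\<bar> \<le> d \<and> \<not> bij (\<lambda>x. T x - s *\<^sub>R x)"
proof (rule ccontr)
  assume "\<not> ?thesis"
  then have bij: "bij (\<lambda>x. T x - s *\<^sub>R x)" if "\<bar>s\<bar> \<le> d" for s
    using that by blast
  have below: "bounded_below (\<lambda>x. T x - s *\<^sub>R x)" if "\<bar>s\<bar> \<le> d" for s
    using bounded_below_bij_symmetric_operator[OF _ symmetric_operator_minus_scaleR[OF assms(2)] bij[OF that]]
    by (simp add: linear_compose_sub assms(1) linear_scaleR)
  have "bij T"
    using bij[of 0] assms(4) norm_ge_zero[of "T \<phi>"] by simp
  note R = bounded_linear_inv_symmetric_operator[OF assms(1,2) \<open>bij T\<close>]
  define M where "M = onorm (inv T)"
  have "norm (inv T (T \<phi>)) \<le> M * d"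
    using onorm[OF R, of "T \<phi>"] mult_left_mono[OF assms(4) onorm_pos_le[OF R]] by (simp add: M_def)
  then have "1 \<le> M * d"
    using \<open>bij T\<close> assms(3) by (simp add: bij_is_inj)
  moreover have "M \<ge> 0"
    using onorm_pos_le[OF R] by (simp add: M_def)
  ultimately have "M > 0"
    by (cases "M = 0") auto
  then have "\<bar>1 / M\<bar> \<le> d" "\<bar>- (1 / M)\<bar> \<le> d"
    using \<open>1 \<le> M * d\<close> by (simp_all add: divide_le_eq mult.commute)
  then have "bounded_below (\<lambda>u. T (T u) - (1 / M)\<^sup>2 *\<^sub>R u)"
    using bounded_below_square_minus[OF assms(1) below below] by blast
  then show False
    using not_bounded_below_square_minus_inv_onorm[OF assms(1,2) \<open>bij T\<close>] \<open>M > 0\<close>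
    by (simp add: M_def)
qed

section \<open>Jacobi operators\<close>

definition jacobi :: "(int \<Rightarrow> real) \<Rightarrow> (int \<Rightarrow> complex) \<Rightarrow> int \<Rightarrow> complex" where
  "jacobi w f = (\<lambda>n. f (n + 1) + f (n - 1) + complex_of_real (w n) * f n)"

lemma l2Z_jacobi:
  assumes "f \<in> l2Z" "bounded (range w)"
  shows "jacobi w f \<in> l2Z"
proof -
  obtain B where "\<And>n. \<bar>w n\<bar> \<le> B"
    using assms(2) by (auto simp: bounded_real)
  then show ?thesis
    unfolding jacobi_def
    by (intro l2Z_add l2Z_translate l2Z_translate_minus l2Z_mult_bounded assms(1))
qed

lemma l2_inner_jacobi:
  assumes "f \<in> l2Z" "g \<in> l2Z" "bounded (range w)"
  shows "l2_inner (jacobi w f) g = l2_inner f (jacobi w g)"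
proof -
  obtain B where B: "\<And>n. \<bar>w n\<bar> \<le> B"
    using assms(3) by (auto simp: bounded_real)
  have f: "(\<lambda>n. f (n + 1)) \<in> l2Z" "(\<lambda>n. f (n - 1)) \<in> l2Z" "(\<lambda>n. complex_of_real (w n) * f n) \<in> l2Z"
    by (simp_all add: l2Z_translate l2Z_translate_minus l2Z_mult_bounded[OF assms(1) B] assms(1))
  have g: "(\<lambda>n. g (n + 1)) \<in> l2Z" "(\<lambda>n. g (n - 1)) \<in> l2Z" "(\<lambda>n. complex_of_real (w n) * g n) \<in> l2Z"
    by (simp_all add: l2Z_translate l2Z_translate_minus l2Z_mult_bounded[OF assms(2) B] assms(2))
  have "l2_inner (jacobi w f) g
      = l2_inner (\<lambda>n. f (n + 1)) g + l2_inner (\<lambda>n. f (n - 1)) g + l2_inner (\<lambda>n. complex_of_real (w n) * f n) g"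
    unfolding jacobi_def by (simp add: l2_inner_add_left l2Z_add f assms(2))
  also have "\<dots> = l2_inner f (\<lambda>n. g (n - 1)) + l2_inner f (\<lambda>n. g (n + 1)) + l2_inner f (\<lambda>n. complex_of_real (w n) * g n)"
    by (simp add: l2_inner_translate l2_inner_translate_minus l2_inner_mult_real)
  also have "\<dots> = l2_inner f (jacobi w g)"
    unfolding jacobi_def by (simp add: l2_inner_add_right l2Z_add g assms(1))
  finally show ?thesis .
qed

definition jacobi_op :: "(int \<Rightarrow> real) \<Rightarrow> l2 \<Rightarrow> l2" where
  "jacobi_op w x = Abs_l2 (jacobi w (vec x))"

lemma vec_jacobi_op: "bounded (range w) \<Longrightarrow> vec (jacobi_op w x) = jacobi w (vec x)"
  unfolding jacobi_op_def by (rule Abs_l2_inverse) (simp add: l2Z_jacobi vec_in_l2Z)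

lemma linear_jacobi_op:
  assumes "bounded (range w)"
  shows "linear (jacobi_op w)"
proof (rule linearI)
  fix x y :: l2 and r :: real
  show "jacobi_op w (x + y) = jacobi_op w x + jacobi_op w y"
    by (rule vec_inject[THEN iffD1]) (simp add: vec_jacobi_op[OF assms] plus_l2.rep_eq jacobi_def algebra_simps)
  show "jacobi_op w (r *\<^sub>R x) = r *\<^sub>R jacobi_op w x"
    by (rule vec_inject[THEN iffD1]) (simp add: vec_jacobi_op[OF assms] scaleR_l2.rep_eq jacobi_def algebra_simps)
qed

lemma symmetric_operator_jacobi_op:
  assumes "bounded (range w)"
  shows "symmetric_operator (jacobi_op w)"
  unfolding symmetric_operator_def inner_l2.rep_eq
  by (simp add: vec_jacobi_op[OF assms] l2_inner_jacobi[OF vec_in_l2Z vec_in_l2Z assms])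

lemma bij_jacobi_op:
  assumes "bounded (range w)" "bij_betw (jacobi w) l2Z l2Z"
  shows "bij (jacobi_op w)"
proof -
  have "bij_betw Abs_l2 l2Z UNIV" "bij_betw vec UNIV l2Z"
    by (simp_all add: bij_betw_def inj_on_def Abs_l2_inject vec_inject
        type_definition.Rep_range[OF type_definition_l2] type_definition.Abs_image[OF type_definition_l2])
  then have "bij (Abs_l2 \<circ> jacobi w \<circ> vec)"
    using assms(2) by (intro bij_betw_trans)
  moreover have "Abs_l2 \<circ> jacobi w \<circ> vec = jacobi_op w"
    by (simp add: jacobi_op_def fun_eq_iff)
  ultimately show ?thesis by simp
qed

lemma jacobi_minus_const: "jacobi (\<lambda>n. w n - s) = (\<lambda>f n. jacobi w f n - complex_of_real s * f n)"
  by (simp add: jacobi_def fun_eq_iff algebra_simps)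

lemma bounded_range_minus_const:
  fixes w :: "'a \<Rightarrow> 'b::real_normed_vector"
  shows "bounded (range w) \<Longrightarrow> bounded (range (\<lambda>n. w n - s))"
  using bounded_minus_comp[of w UNIV "\<lambda>_. s"] by simp

lemma jacobi_op_minus_scaleR:
  assumes "bounded (range w)"
  shows "jacobi_op w x - s *\<^sub>R x = jacobi_op (\<lambda>n. w n - s) x"
  by (rule vec_inject[THEN iffD1])
    (simp add: vec_jacobi_op assms bounded_range_minus_const vec_diff scaleR_l2.rep_eq jacobi_minus_const)

lemma infdist_spec_l2_jacobi_le:
  assumes "bounded (range w)" "\<phi> \<in> l2Z" "l2_sqnorm \<phi> > 0" "0 \<le> d"
    and "l2_sqnorm (jacobi (\<lambda>n. w n - E) \<phi>) \<le> d\<^sup>2 * l2_sqnorm \<phi>"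
  shows "infdist (complex_of_real E) (spec_l2 (jacobi w)) \<le> d"
proof -
  define w' where "w' = (\<lambda>n. w n - E)"
  have w': "bounded (range w')"
    unfolding w'_def by (rule bounded_range_minus_const[OF assms(1)])
  define x where "x = (1 / sqrt (l2_sqnorm \<phi>)) *\<^sub>R Abs_l2 \<phi>"
  have "norm (Abs_l2 \<phi>) = sqrt (l2_sqnorm \<phi>)"
    using assms(2) by (simp add: norm_l2.rep_eq Abs_l2_inverse)
  then have "norm x = 1"
    using assms(3) by (simp add: x_def)
  moreover have "norm (jacobi_op w' x) \<le> d"
  proof -
    have "norm (jacobi_op w' (Abs_l2 \<phi>)) = sqrt (l2_sqnorm (jacobi w' \<phi>))"
      using assms(2) by (simp add: norm_l2.rep_eq vec_jacobi_op[OF w'] Abs_l2_inverse)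
    also have "\<dots> \<le> sqrt (d\<^sup>2 * l2_sqnorm \<phi>)"
      using assms(5) by (simp add: w'_def)
    also have "\<dots> = d * sqrt (l2_sqnorm \<phi>)"
      using assms(4) by (simp add: real_sqrt_mult)
    finally show ?thesis
      using assms(3) by (simp add: x_def linear_scale[OF linear_jacobi_op[OF w']] divide_le_eq)
  qed
  ultimately obtain s where s: "\<bar>s\<bar> \<le> d" "\<not> bij (\<lambda>x. jacobi_op w' x - s *\<^sub>R x)"
    using symmetric_operator_spectrum_near_approx_eigenvalue[OF linear_jacobi_op symmetric_operator_jacobi_op, OF w' w']
    by blast
  then have "\<not> bij_betw (jacobi (\<lambda>n. w' n - s)) l2Z l2Z"
    using bij_jacobi_op[OF bounded_range_minus_const[OF w']] by (auto simp: jacobi_op_minus_scaleR[OF w'])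
  then have "complex_of_real (E + s) \<in> spec_l2 (jacobi w)"
    by (simp add: spec_l2_def w'_def jacobi_minus_const algebra_simps)
  then have "infdist (complex_of_real E) (spec_l2 (jacobi w)) \<le> dist (complex_of_real E) (complex_of_real (E + s))"
    by (rule infdist_le)
  also have "\<dots> \<le> d"
    using s(1) by (simp add: dist_complex_def)
  finally show ?thesis .
qed

section \<open>Dirichlet sine waves\<close>

lemma sin_add_one_plus_sin_diff_one:
  "sin (t * (x + 1)) + sin (t * (x - 1)) = 2 * cos t * sin (t * x)" for t x :: real
  by (simp add: distrib_left right_diff_distrib sin_add sin_diff)

lemma two_sin_mult_sum_cos:
  "2 * sin t * (\<Sum>m=1..n. cos (2 * real m * t)) = sin ((2 * real n + 1) * t) - sin t"
proof (induction n)
  case (Suc n)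
  have "2 * sin t * cos (2 * real (Suc n) * t) = sin ((2 * real (Suc n) + 1) * t) - sin ((2 * real n + 1) * t)"
  proof -
    have "(2 * real (Suc n) + 1) * t = 2 * real (Suc n) * t + t"
      and "(2 * real n + 1) * t = 2 * real (Suc n) * t - t"
      by (simp_all add: algebra_simps)
    then show ?thesis by (simp add: sin_add sin_diff)
  qed
  then show ?case
    using Suc by (simp add: distrib_left)
qed simp

lemma sum_sin_square_dirichlet:
  assumes "1 \<le> k" "k \<le> p"
  shows "(\<Sum>m=1..p. (sin (pi * real k / (real p + 1) * real m))\<^sup>2) = (real p + 1) / 2"
proof -
  define t where "t = pi * real k / (real p + 1)"
  have "pi * real k < pi * (real p + 1)"
    using assms by simp
  then have "0 < t" "t < pi"
    using assms by (simp_all add: t_def pos_divide_less_eq)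
  then have "sin t > 0"
    by (rule sin_gt_zero)
  have "(2 * real p + 1) * t = 2 * pi * real k - t"
    by (simp add: t_def field_simps)
  then have "sin ((2 * real p + 1) * t) = - sin t"
    using sin_npi[of "2 * k"] cos_npi_int[of "2 * int k"] by (simp add: sin_diff mult_ac)
  then have sum_cos: "(\<Sum>m=1..p. cos (2 * real m * t)) = -1"
    using two_sin_mult_sum_cos[of t p] \<open>sin t > 0\<close> mult_left_cancel[of "sin t" _ "-1"] by simp
  have "(sin (t * real m))\<^sup>2 = (1 - cos (2 * real m * t)) / 2" for m
    using cos_double_sin[of "t * real m"] by (simp add: mult_ac)
  then have "(\<Sum>m=1..p. (sin (t * real m))\<^sup>2) = (\<Sum>m=1..p. (1 - cos (2 * real m * t)) / 2)"
    by (intro sum.cong) simp_all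
  also have "\<dots> = (real p - (\<Sum>m=1..p. cos (2 * real m * t))) / 2"
    by (simp add: sum_divide_distrib[symmetric] sum_subtractf)
  also have "\<dots> = (real p + 1) / 2"
    using sum_cos by simp
  finally show ?thesis
    unfolding t_def .
qed

definition sine_vec :: "int \<Rightarrow> nat \<Rightarrow> real \<Rightarrow> int \<Rightarrow> complex" where
  "sine_vec a p t n = (if a < n \<and> n \<le> a + int p then complex_of_real (sin (t * of_int (n - a))) else 0)"

lemma sine_vec_in_l2Z: "sine_vec a p t \<in> l2Z"
  by (rule l2Z_finite_support[of "{a<..a + int p}"]) (auto simp: sine_vec_def)

lemma l2_sqnorm_sine_vec: "l2_sqnorm (sine_vec a p t) = (\<Sum>m=1..p. (sin (t * real m))\<^sup>2)"
proof -
  have "l2_sqnorm (sine_vec a p t) = (\<Sum>n\<in>{a<..a + int p}. (cmod (sine_vec a p t n))\<^sup>2)"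
    by (rule l2_sqnorm_finite_support) (auto simp: sine_vec_def)
  also have "{a<..a + int p} = (\<lambda>m. a + int m) ` {1..p}"
  proof (intro equalityI subsetI)
    fix n
    assume "n \<in> {a<..a + int p}"
    then have "n = a + int (nat (n - a))" "nat (n - a) \<in> {1..p}" by auto
    then show "n \<in> (\<lambda>m. a + int m) ` {1..p}" by blast
  qed auto
  also have "(\<Sum>n\<in>(\<lambda>m. a + int m) ` {1..p}. (cmod (sine_vec a p t n))\<^sup>2) = (\<Sum>m=1..p. (sin (t * real m))\<^sup>2)"
    by (subst sum.reindex) (auto simp: inj_on_def sine_vec_def)
  finally show ?thesis .
qed

lemma jacobi_sine_vec:
  assumes "p \<ge> 1" "sin (t * (real p + 1)) = 0"
    and "\<And>n. a < n \<Longrightarrow> n \<le> a + int p \<Longrightarrow> w n = - (2 * cos t)"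
  shows "jacobi w (sine_vec a p t)
    = (\<lambda>n. if n = a then complex_of_real (sin t)
           else if n = a + int p + 1 then complex_of_real (sin (t * real p)) else 0)"
proof
  fix n
  have ext: "sine_vec a p t m = complex_of_real (sin (t * of_int (m - a)))" if "a \<le> m" "m \<le> a + int p + 1" for m
    using that assms(2) by (cases "m = a \<or> m = a + int p + 1") (auto simp: sine_vec_def add.commute)
  consider "a < n \<and> n \<le> a + int p" | "n = a" | "n = a + int p + 1" | "n < a \<or> a + int p + 1 < n"
    by linarith
  then show "jacobi w (sine_vec a p t) n = (if n = a then complex_of_real (sin t)
      else if n = a + int p + 1 then complex_of_real (sin (t * real p)) else 0)"
  proof cases
    case 1
    then have "jacobi w (sine_vec a p t) n = complex_of_real (sin (t * (of_int (n - a) + 1))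
        + sin (t * (of_int (n - a) - 1)) - 2 * cos t * sin (t * of_int (n - a)))"
      using assms(3) by (simp add: jacobi_def ext algebra_simps)
    then show ?thesis
      using 1 by (simp add: sin_add_one_plus_sin_diff_one)
  qed (use assms(1) in \<open>auto simp: jacobi_def sine_vec_def\<close>)
qed

lemma l2_sqnorm_jacobi_sine_vec:
  assumes "p \<ge> 1" "sin (t * (real p + 1)) = 0"
    and "\<And>n. a < n \<Longrightarrow> n \<le> a + int p \<Longrightarrow> w n = - (2 * cos t)"
  shows "l2_sqnorm (jacobi w (sine_vec a p t)) = (sin t)\<^sup>2 + (sin (t * real p))\<^sup>2"
proof -
  have "l2_sqnorm (jacobi w (sine_vec a p t))
      = (\<Sum>n\<in>{a, a + int p + 1}. (cmod (jacobi w (sine_vec a p t) n))\<^sup>2)"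
    by (rule l2_sqnorm_finite_support) (simp_all add: jacobi_sine_vec[OF assms])
  then show ?thesis
    by (simp add: jacobi_sine_vec[OF assms])
qed

section \<open>The polymer model\<close>

lemma polymer_H_eq_jacobi: "polymer_H p v \<omega> l = jacobi (polymer_V p v \<omega> l)"
  by (simp add: polymer_H_def jacobi_def fun_eq_iff)

lemma bounded_range_polymer_V: "bounded (range (polymer_V p v \<omega> l))"
  unfolding bounded_real polymer_V_def vblock_def by (intro exI[of _ "\<bar>v\<bar>"]) auto

lemma polymer_V_eq_0_on_plus_block:
  assumes "p \<ge> 1" "\<omega> j = 1" "2 * int p * j - l \<le> n" "n < 2 * int p * j - l + int p"
  shows "polymer_V p v \<omega> l n = 0"
proof -
  define m where "m = n + l - 2 * int p * j"
  have m: "0 \<le> m" "m < int p"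
    using assms(3,4) by (simp_all add: m_def)
  have "n + l = m + j * (2 * int p)"
    by (simp add: m_def algebra_simps)
  then have "(n + l) div (2 * int p) = j" "(n + l) mod (2 * int p) = m"
    using m assms(1) by simp_all
  then show ?thesis
    using assms(2) m by (simp add: polymer_V_def vblock_def)
qed

lemma sin_mult_square_le:
  assumes "sin (t * (real p + 1)) = 0"
  shows "(sin (t * real p))\<^sup>2 \<le> t\<^sup>2"
proof -
  have "sin (t * real p) = - cos (t * (real p + 1)) * sin t"
    using assms sin_diff[of "t * (real p + 1)" t] by (simp add: algebra_simps)
  then have "\<bar>sin (t * real p)\<bar> \<le> \<bar>sin t\<bar>"
    by (simp add: abs_mult mult_left_le_one_le)
  then have "\<bar>sin (t * real p)\<bar> \<le> \<bar>t\<bar>"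
    using abs_sin_x_le_abs_x[of t] by linarith
  then show ?thesis
    by (simp add: abs_le_square_iff)
qed

lemma dirichlet_defect_le:
  assumes "p \<ge> 1"
  shows "2 * (pi * real k / (real p + 1)) / sqrt (real p + 1) \<le> 18 * real k / real p powr (3/2)"
proof -
  have "real p powr (3/2) = real p * sqrt (real p)"
    using powr_add[of "real p" 1 "1/2"] powr_half_sqrt[of "real p"] by simp
  moreover have "2 * (pi * real k / (real p + 1)) / sqrt (real p + 1)
      = (2 * pi * real k) / ((real p + 1) * sqrt (real p + 1))"
    by (simp add: field_simps)
  moreover have "(2 * pi * real k) / ((real p + 1) * sqrt (real p + 1)) \<le> (18 * real k) / (real p * sqrt (real p))"
    using assms pi_less_4 by (intro frac_le mult_mono mult_right_mono) auto
  ultimately show ?thesis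
    by simp
qed

lemma infdist_spec_polymer_H_le:
  assumes "p \<ge> 1" "1 \<le> k" "k \<le> p" "\<omega> j = 1"
  shows "infdist (complex_of_real (2 * cos (pi * real k / (real p + 1)))) (spec_l2 (polymer_H p v \<omega> l))
    \<le> 18 * real k / real p powr (3/2)"
proof -
  define t where "t = pi * real k / (real p + 1)"
  define a where "a = 2 * int p * j - l - 1"
  define \<phi> where "\<phi> = sine_vec a p t"
  have sin_t: "sin (t * (real p + 1)) = 0"
    using sin_npi[of k] by (simp add: t_def mult.commute)
  have w: "polymer_V p v \<omega> l n - 2 * cos t = - (2 * cos t)" if "a < n" "n \<le> a + int p" for n
    using polymer_V_eq_0_on_plus_block[of p \<omega> j l n v] assms(1,4) that by (simp add: a_def)
  have norm: "l2_sqnorm \<phi> = (real p + 1) / 2"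
    using sum_sin_square_dirichlet[OF assms(2,3)] by (simp add: \<phi>_def l2_sqnorm_sine_vec t_def)
  have "l2_sqnorm (jacobi (\<lambda>n. polymer_V p v \<omega> l n - 2 * cos t) \<phi>) \<le> 2 * t\<^sup>2"
    using l2_sqnorm_jacobi_sine_vec[OF assms(1) sin_t w] sin_mult_square_le[OF sin_t]
      abs_sin_x_le_abs_x[of t] by (simp add: \<phi>_def abs_le_square_iff)
  also have "2 * t\<^sup>2 = (2 * t / sqrt (real p + 1))\<^sup>2 * l2_sqnorm \<phi>"
    by (simp add: norm power_divide)
  finally have "infdist (complex_of_real (2 * cos t)) (spec_l2 (jacobi (polymer_V p v \<omega> l)))
      \<le> 2 * t / sqrt (real p + 1)"
    using norm by (intro infdist_spec_l2_jacobi_le bounded_range_polymer_V)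
      (simp_all add: \<phi>_def sine_vec_in_l2Z t_def)
  then show ?thesis
    using dirichlet_defect_le[OF assms(1), of k] by (simp add: polymer_H_eq_jacobi t_def)
qed

lemma AE_exists_plus_site:
  assumes "prob_space \<mu>0" "sets \<mu>0 = sets Omega_M" "space \<mu>0 = space Omega_M"
    and "shift_invariant \<mu>0" "shift_ergodic \<mu>0"
    and "measure \<mu>0 {\<omega> \<in> space \<mu>0. \<omega> 0 = -1} < 1"
  shows "AE \<omega> in \<mu>0. \<exists>j. \<omega> j = 1"
proof -
  interpret prob_space \<mu>0 by fact
  define B where "B = {\<omega> \<in> space \<mu>0. \<forall>j. \<omega> j = -1}"
  have B: "B \<in> sets \<mu>0"
  proof -
    have "{\<omega> \<in> space Omega_M. \<forall>j. \<omega> j = -1} \<in> sets Omega_M"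
      unfolding Omega_M_def by measurable
    then show ?thesis using assms(2,3) by (simp add: B_def)
  qed
  have "{\<omega> \<in> space \<mu>0. \<omega> 0 = -1} \<in> sets \<mu>0"
  proof -
    have "{\<omega> \<in> space Omega_M. \<omega> 0 = -1} \<in> sets Omega_M"
      unfolding Omega_M_def by measurable
    then show ?thesis using assms(2,3) by simp
  qed
  then have "measure \<mu>0 B \<le> measure \<mu>0 {\<omega> \<in> space \<mu>0. \<omega> 0 = -1}"
    by (rule finite_measure_mono[rotated]) (auto simp: B_def)
  moreover have "shift -` B \<inter> space \<mu>0 = B"
  proof -
    have "shift \<in> space \<mu>0 \<rightarrow> space \<mu>0"
      using assms(4) by (simp add: shift_invariant_def measurable_def)
    moreover have "(\<forall>j. \<omega> (j + 1) = -1) \<longleftrightarrow> (\<forall>j. \<omega> j = -1)" for \<omega> :: "int \<Rightarrow> int"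
      by (metis diff_add_cancel)
    ultimately show ?thesis
      unfolding B_def shift_def by blast
  qed
  ultimately have "measure \<mu>0 B = 0"
    using assms(5,6) B unfolding shift_ergodic_def by fastforce
  then have "B \<in> null_sets \<mu>0"
    using B by (simp add: emeasure_eq_measure null_sets_def)
  moreover have "\<omega> \<in> B" if "\<omega> \<in> space \<mu>0" "\<nexists>j. \<omega> j = 1" for \<omega>
  proof -
    have "\<omega> j \<in> {-1, 1}" for j
      using that(1) assms(3) by (auto simp: Omega_M_def space_PiM)
    then show ?thesis
      using that by (auto simp: B_def)
  qed
  ultimately show ?thesis
    by (intro AE_I'[of B]) auto
qed

theorem proposition4p3:
  fixes \<mu>0 :: "(int \<Rightarrow> int) measure" and p :: nat and v :: real
  assumes "prob_space \<mu>0"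
    and "sets \<mu>0 = sets Omega_M" and "space \<mu>0 = space Omega_M"
    and "shift_invariant \<mu>0" and "shift_ergodic \<mu>0"
    and "p \<ge> 1" and "v > 0"
    and "measure \<mu>0 {\<omega> \<in> space \<mu>0. \<omega> 0 = -1} < 1"
  shows "AE x in (\<mu>0 \<Otimes>\<^sub>M measure_pmf (pmf_of_set {0..<2 * int p})).
           \<forall>k \<in> {1..p}.
             infdist (complex_of_real (2 * cos (pi * real k / (real p + 1))))
                     (spec_l2 (polymer_H p v (fst x) (snd x)))
               \<le> 18 * real k / real p powr (3/2)"
proof -
  let ?Q = "measure_pmf (pmf_of_set {0..<2 * int p})"
  have marginal: "distr (\<mu>0 \<Otimes>\<^sub>M ?Q) \<mu>0 fst = \<mu>0"
    by (rule prob_space.distr_pair_fst) (rule prob_space_measure_pmf)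
  have "AE \<omega> in distr (\<mu>0 \<Otimes>\<^sub>M ?Q) \<mu>0 fst. \<exists>j. \<omega> j = 1"
    unfolding marginal by (rule AE_exists_plus_site[OF assms(1-5,8)])
  then have "AE x in \<mu>0 \<Otimes>\<^sub>M ?Q. \<exists>j. fst x j = 1"
    by (rule AE_distrD[OF measurable_fst])
  then show ?thesis
  proof eventually_elim
    case (elim x)
    then show ?case
      using infdist_spec_polymer_H_le[OF assms(6)] by auto
  qed
qed

end
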